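(* Let $k \ge 2$ be an integer, $h_k(x) = x + \left\lfloor \frac{x}{k-1} \right\rfloor + 1$ for non-negative integers $x$, and let $\mathcal{G}$ be the Grundy function of Maximum Nim with rule function $f(x)=\lfloor x/k \rfloor$. Then: (i) $h_k(x) = \left\lfloor \frac{h_k(x)}{k} \right\rfloor + x + 1$ for every non-negative integer $x$; (ii) $\mathcal{G}(h_k(x)) = \mathcal{G}(x)$ for every non-negative integer $x$; (iii) for every non-negative integer $m$ there exists a non-negative integer $x_0$ such that $\{x \in \mathbb{Z}_{\ge 0} : \mathcal{G}(x) = m\} = \{h_k^p(x_0) : p \in \mathbb{Z}_{\ge 0}\}$, where $h_k^p$ is the $p$-th functional iterate of $h_k$.
   Context: Maximum Nim with rule function $f(x)=\lfloor x/k\rfloor$: a position is a pile of $x \ge 0$ stones, and from $x$ one may move to $x-u$ for any integer $u$ with $1 \le u \le \lfloor x/k \rfloor$. The Grundy number is defined recursively by $\mathcal{G}(x) = \mathrm{mex}\{\mathcal{G}(x-u) : 1 \le u \le \lfloor x/k\rfloor\}$, where $\mathrm{mex}(S)$ is the least non-negative integer not in $S$. *)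

theory Defs
  imports Main
begin

definition mex :: "nat set \<Rightarrow> nat" where
  "mex S = (LEAST n. n \<notin> S)"

function maxnim_grundy :: "nat \<Rightarrow> nat \<Rightarrow> nat" where
  "maxnim_grundy k x =
     mex ((\<lambda>u. maxnim_grundy k (x - u)) ` {1..x div k})"
  by auto
termination
  by (relation "measure snd") (auto simp: div_le_dividend intro: diff_less_mono2 dest: order_trans[OF _ div_le_dividend])

definition h :: "nat \<Rightarrow> nat \<Rightarrow> nat" where
  "h k x = x + x div (k - 1) + 1"

end

theory Submission
  imports Defs
begin

text \<open>The map \<open>h k\<close> is a strictly increasing bijection from the naturals onto the
  non-multiples of \<open>k\<close>, inverted by \<open>x \<mapsto> x - \<lfloor>x/k\<rfloor> - 1\<close>, the largest move from \<open>x\<close>. Iterating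
  this inverse from \<open>x\<close> ends at a multiple \<open>r k\<close> of \<open>k\<close>, the root of the \<open>h k\<close>-orbit of \<open>x\<close>,
  and the Grundy value of \<open>x\<close> is \<open>r\<close>: the options of \<open>x\<close> form the interval
  \<open>[x - \<lfloor>x/k\<rfloor>, x)\<close>, which lies strictly between two consecutive points of the orbit of \<open>x\<close>
  and contains the last point below \<open>x\<close> of the orbit of every smaller multiple of \<open>k\<close>.
  Hence the Grundy classes are exactly the orbits of \<open>h k\<close>.\<close>

declare maxnim_grundy.simps[simp del]

lemma mex_eqI:
  assumes "g \<notin> S" and "\<And>i. i < g \<Longrightarrow> i \<in> S"
  shows "mex S = g"
  unfolding mex_def
  by (rule Least_equality) (use assms in \<open>auto simp: not_less[symmetric]\<close>)

lemma strict_mono_funpow: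
  fixes f :: "nat \<Rightarrow> nat"
  assumes "\<And>x. x < f x"
  shows "strict_mono (\<lambda>p. (f ^^ p) x)"
  by (rule strict_mono_Suc_iff[THEN iffD2]) (simp add: assms)

lemma strict_mono_nat_bracket:
  fixes s :: "nat \<Rightarrow> nat"
  assumes "strict_mono s" and "s 0 \<le> x"
  obtains p where "s p \<le> x" and "x < s (Suc p)"
proof -
  define n where "n = (LEAST n. x < s n)"
  have "x < s (Suc x)"
    using strict_mono_imp_increasing[OF assms(1), of "Suc x"] by simp
  then have n: "x < s n" and n_least: "\<And>m. x < s m \<Longrightarrow> n \<le> m"
    unfolding n_def by (auto intro: LeastI Least_le)
  then obtain p where p: "n = Suc p"
    using assms(2) by (cases n) auto
  then have "s p \<le> x"
    using n_least[of p] by (cases "x < s p") auto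
  then show ?thesis
    using that n p by simp
qed

lemma maxnim_grundy_eq_mex_interval:
  "maxnim_grundy k x = mex (maxnim_grundy k ` {x - x div k..<x})"
proof -
  have "(\<lambda>u. x - u) ` {1..x div k} = {x - x div k..<x}"
  proof (intro set_eqI iffI)
    fix z assume "z \<in> {x - x div k..<x}"
    then show "z \<in> (\<lambda>u. x - u) ` {1..x div k}"
      by (intro image_eqI[of _ _ "x - z"]) auto
  next
    fix z assume "z \<in> (\<lambda>u. x - u) ` {1..x div k}"
    then obtain u where "z = x - u" "1 \<le> u" "u \<le> x div k" by auto
    moreover from \<open>u \<le> x div k\<close> have "u \<le> x" by (meson div_le_dividend order_trans)
    ultimately show "z \<in> {x - x div k..<x}" by auto
  qed
  then show ?thesis
    by (subst maxnim_grundy.simps) (simp add: image_image[symmetric])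
qed

lemma h_eq_div_mod:
  assumes "k \<ge> 2"
  shows "h k y = y div (k - 1) * k + (y mod (k - 1) + 1)"
proof -
  obtain j where k: "k = Suc j" using assms by (cases k) auto
  have "y = y div j * j + y mod j" by simp
  then show ?thesis unfolding h_def k by simp
qed

lemma mod_pred_add_one_less:
  fixes k :: nat
  assumes "k \<ge> 2"
  shows "y mod (k - 1) + 1 < k"
proof -
  have "y mod (k - 1) < k - 1" using assms by (intro mod_less_divisor) simp
  then show ?thesis by simp
qed

lemma h_div:
  assumes "k \<ge> 2"
  shows "h k y div k = y div (k - 1)"
  unfolding h_eq_div_mod[OF assms] using mod_pred_add_one_less[OF assms] by (intro div_nat_eqI) auto

lemma h_mod:
  assumes "k \<ge> 2"
  shows "h k y mod k = y mod (k - 1) + 1"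
  unfolding h_eq_div_mod[OF assms] using mod_pred_add_one_less[OF assms] by simp

lemma not_dvd_h:
  assumes "k \<ge> 2"
  shows "\<not> k dvd h k y"
  by (simp add: dvd_eq_mod_eq_0 h_mod[OF assms])

lemma h_eq_h_div_plus:
  assumes "k \<ge> 2"
  shows "h k y = h k y div k + y + 1"
  using h_div[OF assms, of y] by (simp add: h_def)

definition h_inv :: "nat \<Rightarrow> nat \<Rightarrow> nat" where
  "h_inv k x = x - x div k - 1"

lemma h_inv_h:
  assumes "k \<ge> 2"
  shows "h_inv k (h k y) = y"
  using h_eq_h_div_plus[OF assms, of y] unfolding h_inv_def by linarith

lemma h_h_inv:
  assumes "k \<ge> 2" and "\<not> k dvd x"
  shows "h k (h_inv k x) = x"
proof -
  obtain j where k: "k = Suc j" using assms by (cases k) auto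
  have "x mod k \<noteq> 0" using assms(2) by (simp add: dvd_eq_mod_eq_0)
  moreover have "x = x div k * j + x div k + x mod k"
    unfolding k by (metis add.commute div_mult_mod_eq mult_Suc_right)
  moreover have "x mod k < Suc j" using k by simp
  ultimately have "h_inv k x = x div k * j + (x mod k - 1)" and "x mod k - 1 < j"
    unfolding h_inv_def by auto
  then have "h_inv k x div j = x div k"
    by (auto intro: div_nat_eqI)
  then show ?thesis
    unfolding h_def using \<open>h_inv k x = _\<close> \<open>x = _\<close> \<open>x mod k \<noteq> 0\<close> k by simp
qed

lemma h_le_of_less_diff_div:
  assumes "k \<ge> 2" and "z < x - x div k"
  shows "h k z \<le> x"
proof -
  have "x < x div k * k + k"
    using assms(1) div_mult_mod_eq[of x k] mod_less_divisor[of k x] by linarith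
  then have "z < (x div k + 1) * (k - 1)"
    using assms by (simp add: algebra_simps diff_mult_distrib2)
  then have "z div (k - 1) < x div k + 1"
    by (rule less_mult_imp_div_less)
  then show ?thesis
    using assms(2) unfolding h_def by linarith
qed

lemma h_orbit_strict_mono: "strict_mono (\<lambda>p. (h k ^^ p) x)"
  by (rule strict_mono_funpow) (simp add: h_def)

function h_root :: "nat \<Rightarrow> nat \<Rightarrow> nat" where
  "h_root k x = (if k dvd x then x else h_root k (h_inv k x))"
  by auto
termination
proof (relation "measure snd")
  fix k x :: nat
  assume "\<not> k dvd x"
  then have "x \<noteq> 0" by (metis dvd_0_right)
  then show "((k, h_inv k x), k, x) \<in> measure snd" by (simp add: h_inv_def)
qed auto

declare h_root.simps[simp del]

lemma h_root_of_dvd: "k dvd x \<Longrightarrow> h_root k x = x"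
  by (simp add: h_root.simps)

lemma h_root_of_not_dvd: "\<not> k dvd x \<Longrightarrow> h_root k x = h_root k (h_inv k x)"
  by (simp add: h_root.simps)

lemma h_root_dvd_le: "k dvd h_root k x \<and> h_root k x \<le> x"
proof (induction k x rule: h_root.induct)
  case (1 k x)
  then show ?case
    by (cases "k dvd x") (auto simp: h_root_of_dvd h_root_of_not_dvd h_inv_def)
qed

lemma h_root_h:
  assumes "k \<ge> 2"
  shows "h_root k (h k y) = h_root k y"
  using assms by (simp add: h_root_of_not_dvd not_dvd_h h_inv_h)

lemma h_root_funpow:
  assumes "k \<ge> 2" and "k dvd r"
  shows "h_root k ((h k ^^ p) r) = r"
  by (induction p) (simp_all add: assms h_root_h h_root_of_dvd)

lemma in_orbit_h_root:
  assumes "k \<ge> 2"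
  shows "\<exists>p. x = (h k ^^ p) (h_root k x)"
proof (induction x rule: less_induct)
  case (less x)
  show ?case
  proof (cases "k dvd x")
    case True
    then show ?thesis by (metis funpow_0 h_root_of_dvd)
  next
    case False
    then have "h_inv k x < x"
      by (cases x) (auto simp: h_inv_def)
    then obtain p where "h_inv k x = (h k ^^ p) (h_root k x)"
      using less h_root_of_not_dvd[OF False] by metis
    then have "x = (h k ^^ Suc p) (h_root k x)"
      using h_h_inv[OF assms False] by (metis funpow.simps(2) o_apply)
    then show ?thesis ..
  qed
qed

lemma h_root_eq_iff:
  assumes "k \<ge> 2" and "k dvd r"
  shows "h_root k x = r \<longleftrightarrow> (\<exists>p. x = (h k ^^ p) r)"
  using in_orbit_h_root[OF assms(1), of x] h_root_funpow[OF assms] by metis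

lemma h_root_option_ne:
  assumes "k \<ge> 2" and "x - x div k \<le> z" and "z < x"
  shows "h_root k z \<noteq> h_root k x"
proof
  assume root_eq: "h_root k z = h_root k x"
  show False
  proof (cases "k dvd x")
    case True
    then show False
      using root_eq h_root_dvd_le[of k z] \<open>z < x\<close> by (simp add: h_root_of_dvd)
  next
    case False
    define r where "r = h_root k x"
    have "h_root k (h_inv k x) = r"
      using h_root_of_not_dvd[OF False] by (simp add: r_def)
    then obtain q where q: "h_inv k x = (h k ^^ q) r"
      using in_orbit_h_root[OF assms(1)] by metis
    obtain p where p: "z = (h k ^^ p) r"
      using in_orbit_h_root[OF assms(1), of z] root_eq by (auto simp: r_def)
    have "x div k < x"
      using assms(1,3) by (intro div_less_dividend) auto
    then have "h_inv k x < z"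
      using assms(2) unfolding h_inv_def by linarith
    then have "(h k ^^ q) r < (h k ^^ p) r"
      using q p by simp
    moreover have "(h k ^^ p) r < (h k ^^ Suc q) r"
      using p q h_h_inv[OF assms(1) False] \<open>z < x\<close> by simp
    ultimately have "q < p" and "p < Suc q"
      using strict_mono_less[OF h_orbit_strict_mono[of k r]] by blast+
    then show False
      by simp
  qed
qed

lemma h_root_option_exists:
  assumes "k \<ge> 2" and "k dvd r" and "r < h_root k x"
  obtains z where "x - x div k \<le> z" and "z < x" and "h_root k z = r"
proof -
  have "r \<le> x"
    using assms(3) h_root_dvd_le[of k x] by simp
  then obtain p where p: "(h k ^^ p) r \<le> x" "x < h k ((h k ^^ p) r)"
    using strict_mono_nat_bracket[OF h_orbit_strict_mono[of k r]] by auto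
  define z where "z = (h k ^^ p) r"
  have root_z: "h_root k z = r"
    by (simp add: z_def h_root_funpow[OF assms(1,2)])
  then have "z \<noteq> x"
    using assms(3) by auto
  moreover have "x - x div k \<le> z"
  proof (rule ccontr)
    assume "\<not> x - x div k \<le> z"
    then have "h k z \<le> x"
      using h_le_of_less_diff_div[OF assms(1)] by simp
    then have "h k z = x"
      using p(2) by (simp add: z_def)
    then show False
      using h_root_h[OF assms(1), of z] root_z assms(3) by simp
  qed
  ultimately show ?thesis
    using that p(1) root_z by (simp add: z_def)
qed

lemma maxnim_grundy_eq_h_root_div:
  assumes "k \<ge> 2"
  shows "maxnim_grundy k x = h_root k x div k"
proof (induction x rule: less_induct)
  case (less x)
  have root_eq: "h_root k y = h_root k z" if "h_root k y div k = h_root k z div k" for y z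
    using that h_root_dvd_le[of k y] h_root_dvd_le[of k z] by (metis dvd_div_mult_self)
  have "mex ((\<lambda>z. h_root k z div k) ` {x - x div k..<x}) = h_root k x div k"
  proof (rule mex_eqI)
    show "h_root k x div k \<notin> (\<lambda>z. h_root k z div k) ` {x - x div k..<x}"
    proof
      assume "h_root k x div k \<in> (\<lambda>z. h_root k z div k) ` {x - x div k..<x}"
      then obtain z where "z \<in> {x - x div k..<x}" and "h_root k z = h_root k x"
        using root_eq by force
      then show False
        using h_root_option_ne[OF assms] by simp
    qed
  next
    fix i assume "i < h_root k x div k"
    then have "i * k < h_root k x div k * k"
      using assms by simp
    also have "\<dots> = h_root k x"
      using h_root_dvd_le[of k x] by simp
    finally obtain z where "z \<in> {x - x div k..<x}" and "h_root k z = i * k"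
      using h_root_option_exists[OF assms, of "i * k" x] by auto
    then show "i \<in> (\<lambda>z. h_root k z div k) ` {x - x div k..<x}"
      using assms by (intro image_eqI[of _ _ z]) auto
  qed
  moreover have "maxnim_grundy k ` {x - x div k..<x} = (\<lambda>z. h_root k z div k) ` {x - x div k..<x}"
    using less by (intro image_cong) auto
  ultimately show ?case
    by (simp add: maxnim_grundy_eq_mex_interval[of k x])
qed

theorem proposition1:
  fixes k :: nat
  assumes "k \<ge> 2"
  shows "(\<forall>x. h k x = h k x div k + x + 1)
    \<and> (\<forall>x. maxnim_grundy k (h k x) = maxnim_grundy k x)
    \<and> (\<forall>m. \<exists>x0. {x. maxnim_grundy k x = m} = {(h k ^^ p) x0 | p. True})"
proof (intro conjI allI)
  fix x
  show "h k x = h k x div k + x + 1"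
    by (rule h_eq_h_div_plus[OF assms])
  show "maxnim_grundy k (h k x) = maxnim_grundy k x"
    by (simp add: maxnim_grundy_eq_h_root_div[OF assms] h_root_h[OF assms])
next
  fix m
  have "maxnim_grundy k x = m \<longleftrightarrow> h_root k x = m * k" for x
    using h_root_dvd_le[of k x] assms
    by (auto simp: maxnim_grundy_eq_h_root_div[OF assms] elim!: dvdE)
  then have "{x. maxnim_grundy k x = m} = {(h k ^^ p) (m * k) | p. True}"
    using h_root_eq_iff[OF assms, of "m * k"] by auto
  then show "\<exists>x0. {x. maxnim_grundy k x = m} = {(h k ^^ p) x0 | p. True}" ..
qed

end
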